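(* For every integer $m\ge 1$, the number of $321$-avoiding permutations of $\{1,\dots,m\}$ whose last letter is not $m$ equals $C_m-C_{m-1}$, and the number of $321$-avoiding permutations of $\{1,\dots,m\}$ whose first letter is not $1$ also equals $C_m-C_{m-1}$. Consequently, for $n\ge 3$ the number of permutations of $\{1,\dots,n\}$ containing the pattern $321$ exactly once equals $$\sum_{b=2}^{n-1}(C_b-C_{b-1})(C_{n-b+1}-C_{n-b}).$$
   Context: $C_k=\frac{(2k)!}{k!\,(k+1)!}$ denotes the $k$-th Catalan number ($C_0=1$). Permutations are written in one-line notation; a permutation $w_1\cdots w_m$ is $321$-avoiding if there are no positions $i<j<k$ with $w_i>w_j>w_k$, and contains $321$ exactly once if there is exactly one such triple of positions. *)

theory Defs
  imports Main
begin

definition catalan :: "nat \<Rightarrow> nat" where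
  "catalan k = fact (2*k) div (fact k * fact (k+1))"

definition perms :: "nat \<Rightarrow> nat list set" where
  "perms m = {w. distinct w \<and> set w = {1..m}}"

definition occ321 :: "nat list \<Rightarrow> (nat \<times> nat \<times> nat) set" where
  "occ321 w = {(i,j,k). i < j \<and> j < k \<and> k < length w \<and> w!i > w!j \<and> w!j > w!k}"

definition avoids321 :: "nat list \<Rightarrow> bool" where
  "avoids321 w \<longleftrightarrow> occ321 w = {}"

definition contains321_once :: "nat list \<Rightarrow> bool" where
  "contains321_once w \<longleftrightarrow> card (occ321 w) = 1"

end

theory Submission
  imports Defs
begin

(*
  A permutation w of {1..n} avoids 321 iff, after deleting its largest
  letter n from position p, the remaining word avoids 321 and is increasing after position p.
  Refining by the length j of the increasing tail required at the end gives a recursion that is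
  solved by the ballot numbers  binom(2n-j, n) - binom(2n-j, n+1);  for j = 0 this is C_n.
  Fixing n at the last position, or 1 at the first position, leaves an arbitrary 321-avoider of
  length n-1, whence the counts C_m - C_(m-1) for "last letter is not m" and "first letter is not 1".

  If occ321 w = {(i, j, k)} then w_j = j+1 =: b, every letter left of j
  except w_i is below b and every letter right of j except w_k is above b.  A word u @ b # v with
  this shape has (i, j, k) as its only 321 iff  u @ [w_k]  and  w_i # v  avoid 321.  Relabelling
  w_i as b and w_k as b in these two words is order preserving and gives a bijection between such
  w and pairs (L, R): L a 321-avoider of {1..b} not ending with b, R a 321-avoider of {b..n} not
  starting with b.  Summing the product of the Part 1 counts over b = 2..n-1 gives the theorem.
*)

section \<open>Ballot numbers and Catalan numbers\<close>

text \<open>The ballot numbers; ballot n j will turn out to count the 321-avoiding permutations of length n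
  whose last j letters increase.\<close>

definition ballot :: "nat \<Rightarrow> nat \<Rightarrow> int" where
  "ballot n j = int ((2*n - j) choose n) - int ((2*n - j) choose (n+1))"

text \<open>Pascal's rule for the binomial coefficients gives the recursion of the ballot numbers.\<close>

lemma ballot_rec:
  assumes "1 \<le> j" "j < n"
  shows "ballot n j = ballot n (j+1) + ballot (n-1) (j-1)"
proof -
  obtain k N where n: "n = Suc k" and N: "2*n - j = Suc N"
    using assms by (metis Suc_diff_Suc less_imp_Suc_add mult_2 trans_less_add1)
  have N1: "2*n - (j+1) = N" and N2: "2*(n-1) - (j-1) = N" using N assms by auto
  have "ballot n j = int ((N choose k) + (N choose Suc k)) - int ((N choose Suc k) + (N choose Suc (Suc k)))"
    unfolding ballot_def N by (simp add: n)
  moreover have "ballot n (j+1) = int (N choose Suc k) - int (N choose Suc (Suc k))"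
    unfolding ballot_def N1 by (simp add: n)
  moreover have "ballot (n-1) (j-1) = int (N choose k) - int (N choose Suc k)"
    unfolding ballot_def N2 by (simp add: n)
  ultimately show ?thesis by simp
qed

lemma ballot_diag: "ballot n n = 1"
  unfolding ballot_def by (simp add: mult_2)

text \<open>Telescoping the recursion: a row of ballot numbers sums to the next row.\<close>

lemma ballot_sum:
  assumes "1 \<le> j" "j \<le> n"
  shows "(\<Sum>i = j-1..n-1. ballot (n-1) i) = ballot n j"
  using assms
proof (induction "n - j" arbitrary: j)
  case 0
  then show ?case by (simp add: ballot_diag)
next
  case (Suc d)
  then have jn: "j < n" by simp
  have IH: "(\<Sum>i = j..n-1. ballot (n-1) i) = ballot n (j+1)"
    using Suc.hyps(1)[of "j+1"] Suc.hyps(2) jn by simp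
  have "(\<Sum>i = j-1..n-1. ballot (n-1) i) = ballot (n-1) (j-1) + (\<Sum>i = j..n-1. ballot (n-1) i)"
    using Suc.prems jn sum.atLeast_Suc_atMost[of "j-1" "n-1" "ballot (n-1)"] by simp
  also have "\<dots> = ballot n j" using IH ballot_rec[of j n] Suc.prems jn by simp
  finally show ?case .
qed

text \<open>An increasing tail of length 1 is no restriction, and the numbers agree accordingly.\<close>

lemma ballot_0_1: "ballot (Suc k) 0 = ballot (Suc k) 1"
proof -
  have sym: "Suc (2*k) choose Suc k = Suc (2*k) choose k"
    using binomial_symmetric[of k "Suc (2*k)"] by (simp add: Suc_diff_le)
  have "ballot (Suc k) 0 = int (Suc (Suc (2*k)) choose Suc k) - int (Suc (Suc (2*k)) choose Suc (Suc k))"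
    unfolding ballot_def by (simp del: binomial_Suc_Suc)
  also have "\<dots> = int (Suc (2*k) choose Suc k) - int (Suc (2*k) choose Suc (Suc k))"
    by (simp only: binomial_Suc_Suc[of "Suc (2*k)" k] binomial_Suc_Suc[of "Suc (2*k)" "Suc k"] sym)
  also have "\<dots> = ballot (Suc k) 1" unfolding ballot_def by (simp del: binomial_Suc_Suc)
  finally show ?thesis .
qed

lemma central_binomial_ratio: "(2*n choose (n+1)) * (n+1) = (2*n choose n) * n"
proof (cases n)
  case (Suc k)
  have "Suc n * (Suc (n + k) choose Suc n) = Suc k * (Suc (n + k) choose n)"
    by (rule Suc_times_binomial_add)
  moreover have "Suc (n + k) = 2*n" "Suc k = n" using Suc by simp_all
  ultimately show ?thesis by (simp add: mult.commute)
qed simp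

lemma catalan_eq_ballot: "int (catalan n) = ballot n 0"
proof -
  define Y where "Y = 2*n choose n"
  define Z where "Z = 2*n choose (n+1)"
  have ZY: "Z * (n+1) = Y * n" unfolding Y_def Z_def by (rule central_binomial_ratio)
  then have "Z * (n+1) \<le> Y * (n+1)" by simp
  then have "Z \<le> Y" by (rule mult_right_le_imp_le) simp
  have "(Y - Z) * (n+1) = Y * (n+1) - Z * (n+1)" by (rule diff_mult_distrib)
  also have "\<dots> = Y" using ZY by simp
  finally have "(Y - Z) * (n+1) = Y" .
  moreover have "fact (2*n) = Y * (fact n * fact n)"
    using binomial_fact_lemma[of n "2*n"] unfolding Y_def by (simp add: mult_2 algebra_simps)
  ultimately have "fact (2*n) = (Y - Z) * (fact n * fact (n+1))"
    by (metis fact_Suc mult.assoc mult.left_commute Suc_eq_plus1 of_nat_id)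
  then have "catalan n = Y - Z" unfolding catalan_def by simp
  then have "int (catalan n) = int Y - int Z" using \<open>Z \<le> Y\<close> by simp
  then show ?thesis unfolding ballot_def Y_def Z_def by simp
qed

section \<open>Permutations as lists\<close>

lemma perms_length: "w \<in> perms n \<Longrightarrow> length w = n"
  unfolding perms_def by (metis (mono_tags) card_atLeastAtMost diff_Suc_1 distinct_card mem_Collect_eq)

lemma distinct_set_eq_card:
  assumes "distinct xs" "set xs \<subseteq> A" "finite A" "length xs = card A"
  shows "set xs = A"
  using assms card_subset_eq distinct_card by metis

lemma perms_intro:
  assumes "distinct w" "length w = n" "set w \<subseteq> {1..n}"
  shows "w \<in> perms n"
  using assms distinct_set_eq_card[of w "{1..n}"] unfolding perms_def by simp

lemma finite_perms: "finite (perms n)"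
proof (rule finite_subset)
  show "perms n \<subseteq> {w. set w \<subseteq> {1..n} \<and> length w = n}"
    using perms_length unfolding perms_def by auto
qed (rule finite_lists_length_eq, simp)

lemma occ321_map_strict_mono:
  assumes "strict_mono_on (set w) f"
  shows "occ321 (map f w) = occ321 w"
proof -
  have ord: "(f (w!i) < f (w!j)) = (w!i < w!j)" if "i < length w" "j < length w" for i j
    using that assms by (metis nth_mem strict_mono_on_less)
  have "(i,j,k) \<in> occ321 (map f w) \<longleftrightarrow> (i,j,k) \<in> occ321 w" for i j k
    unfolding occ321_def using ord[of j i] ord[of k j] by auto
  then show ?thesis by (simp add: set_eq_iff)
qed

lemma avoids321_map_strict_mono:
  "strict_mono_on (set w) f \<Longrightarrow> avoids321 (map f w) \<longleftrightarrow> avoids321 w"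
  unfolding avoids321_def by (simp add: occ321_map_strict_mono)

lemma avoids321_shift: "avoids321 (map (\<lambda>x. x + d) w) \<longleftrightarrow> avoids321 w"
  by (simp add: avoids321_map_strict_mono strict_mono_on_def)

lemma shifted_perms_eq:
  "(distinct (map (\<lambda>x. x + d) v) \<and> set (map (\<lambda>x. x + d) v) = {d+1..d+n}) \<longleftrightarrow> v \<in> perms n"
proof -
  have "set (map (\<lambda>x. x + d) v) = {d+1..d+n} \<longleftrightarrow> set v = {1..n}"
  proof -
    have "(\<lambda>x. x + d) ` {1..n} = {d+1..d+n}" by (simp add: add.commute)
    then show ?thesis by (metis inj_image_eq_iff inj_on_add' list.set_map)
  qed
  then show ?thesis unfolding perms_def by (simp add: distinct_map)
qed

lemma card_shifted_perms:
  "card {v. distinct v \<and> set v = {d+1..d+n} \<and> Q v} = card {v \<in> perms n. Q (map (\<lambda>x. x + d) v)}"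
proof -
  have "{v. distinct v \<and> set v = {d+1..d+n} \<and> Q v} = map (\<lambda>x. x + d) ` {v \<in> perms n. Q (map (\<lambda>x. x + d) v)}"
  proof (rule set_eqI, rule iffI)
    fix v assume v: "v \<in> {v. distinct v \<and> set v = {d+1..d+n} \<and> Q v}"
    then have "map (\<lambda>x. x + d) (map (\<lambda>x. x - d) v) = v" by (auto intro: map_idI)
    then show "v \<in> map (\<lambda>x. x + d) ` {v \<in> perms n. Q (map (\<lambda>x. x + d) v)}"
      using v shifted_perms_eq[of d "map (\<lambda>x. x - d) v"] by (metis (mono_tags, lifting) image_eqI mem_Collect_eq)
  next
    fix v assume "v \<in> map (\<lambda>x. x + d) ` {v \<in> perms n. Q (map (\<lambda>x. x + d) v)}"
    then obtain u where "u \<in> perms n" "Q (map (\<lambda>x. x + d) u)" "v = map (\<lambda>x. x + d) u" by blast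
    then show "v \<in> {v. distinct v \<and> set v = {d+1..d+n} \<and> Q v}"
      using shifted_perms_eq[of d u n] by simp
  qed
  moreover have "inj_on (map (\<lambda>x. x + d)) X" for X by (simp add: inj_on_def)
  ultimately show ?thesis by (simp add: card_image)
qed

section \<open>Inserting the largest letter\<close>

definition ins_at :: "nat \<Rightarrow> 'a \<Rightarrow> 'a list \<Rightarrow> 'a list" where
  "ins_at p x w = take p w @ x # drop p w"

lemma length_ins_at: "p \<le> length w \<Longrightarrow> length (ins_at p x w) = Suc (length w)"
  unfolding ins_at_def by simp

lemma nth_ins_at:
  assumes "p \<le> length w" "q \<le> length w"
  shows "ins_at p x w ! q = (if q < p then w!q else if q = p then x else w!(q-1))"
  using assms unfolding ins_at_def by (auto simp: nth_append min_def nth_Cons')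

lemma set_ins_at: "set (ins_at p x w) = insert x (set w)"
proof -
  have "set w = set (take p w) \<union> set (drop p w)" by (metis append_take_drop_id set_append)
  then show ?thesis unfolding ins_at_def by auto
qed

lemma distinct_ins_at: "distinct (ins_at p x w) \<longleftrightarrow> distinct w \<and> x \<notin> set w"
proof -
  obtain u v where "u = take p w" "v = drop p w" by simp
  then have "w = u @ v" "ins_at p x w = u @ x # v" unfolding ins_at_def by simp_all
  then show ?thesis by auto
qed

lemma inj_ins_at: "inj_on (ins_at p x) {w. p \<le> length w}"
proof (rule inj_onI)
  fix u v assume u: "u \<in> {w. p \<le> length w}" and v: "v \<in> {w. p \<le> length w}"
    and eq: "ins_at p x u = ins_at p x v"
  have "take p (ins_at p x u) = take p u" "drop (Suc p) (ins_at p x u) = drop p u"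
    "take p (ins_at p x v) = take p v" "drop (Suc p) (ins_at p x v) = drop p v"
    using u v unfolding ins_at_def by auto
  then show "u = v" using eq by (metis append_take_drop_id)
qed

lemma avoids321_ins_at_imp:
  assumes p: "p \<le> length w" and av: "avoids321 (ins_at p x w)"
  shows "avoids321 w"
  unfolding avoids321_def
proof (rule ccontr)
  assume "occ321 w \<noteq> {}"
  then obtain i j k where o: "(i,j,k) \<in> occ321 w" by auto
  define e where "e t = (if t < p then t else Suc t)" for t
  have e: "t < length w \<Longrightarrow> ins_at p x w ! (e t) = w ! t" for t
    using p by (auto simp: e_def nth_ins_at)
  have "(e i, e j, e k) \<in> occ321 (ins_at p x w)"
    using o e[of i] e[of j] e[of k] p unfolding occ321_def by (auto simp: e_def length_ins_at)
  then show False using av unfolding avoids321_def by auto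
qed

text \<open>A new maximum at position p is the top of a 321 with every descent after p.\<close>

lemma avoids321_ins_at_max_sorted:
  assumes p: "p \<le> length w" and x: "\<forall>y\<in>set w. y < x" and av: "avoids321 (ins_at p x w)"
  shows "sorted (drop p w)"
  unfolding sorted_iff_nth_mono_less
proof (intro allI impI, rule ccontr)
  fix i j assume ij: "i < j" "j < length (drop p w)" and "\<not> drop p w ! i \<le> drop p w ! j"
  then have "w ! (p+j) < w ! (p+i)" using p by auto
  then have "(p, Suc (p+i), Suc (p+j)) \<in> occ321 (ins_at p x w)"
    unfolding occ321_def using ij p x by (auto simp: length_ins_at nth_ins_at)
  then show False using av unfolding avoids321_def by auto
qed

text \<open>Conversely every 321 in the new word either avoids the maximum or starts at it.\<close>

lemma avoids321_ins_at_max_if: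
  assumes p: "p \<le> length w" and x: "\<forall>y\<in>set w. y < x"
    and av: "avoids321 w" and srt: "sorted (drop p w)"
  shows "avoids321 (ins_at p x w)"
  unfolding avoids321_def
proof (rule ccontr)
  let ?v = "ins_at p x w"
  assume "occ321 ?v \<noteq> {}"
  then obtain i j k where "(i,j,k) \<in> occ321 ?v" by auto
  then have ijk: "i < j" "j < k" "k \<le> length w" "?v!i > ?v!j" "?v!j > ?v!k"
    unfolding occ321_def using p by (auto simp: length_ins_at)
  have small: "t < length w \<Longrightarrow> w!t < x" for t using x by auto
  show False
  proof (cases "i = p")
    case True
    then have "drop p w ! (k-1-p) < drop p w ! (j-1-p)" using ijk p by (auto simp: nth_ins_at)
    moreover have "j-1-p < k-1-p" "k-1-p < length (drop p w)" using ijk True by auto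
    ultimately show False using srt unfolding sorted_iff_nth_mono_less by (meson leD)
  next
    case False
    have "j \<noteq> p" "k \<noteq> p" using ijk small[of i] small[of j] p by (auto simp: nth_ins_at)
    define d where "d t = (if t < p then t else t - 1)" for t
    have "(d i, d j, d k) \<in> occ321 w"
      using ijk False \<open>j \<noteq> p\<close> \<open>k \<noteq> p\<close> p unfolding occ321_def
      by (auto simp: d_def nth_ins_at split: if_splits)
    then show False using av unfolding avoids321_def by auto
  qed
qed

lemma avoids321_ins_at_max:
  assumes "p \<le> length w" "\<forall>y\<in>set w. y < x"
  shows "avoids321 (ins_at p x w) \<longleftrightarrow> avoids321 w \<and> sorted (drop p w)"
  using avoids321_ins_at_imp[OF assms(1)] avoids321_ins_at_max_sorted[OF assms]
    avoids321_ins_at_max_if[OF assms] by blast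

lemma perms_Suc_max_at:
  assumes "p \<le> k"
  shows "{w \<in> perms (Suc k). w!p = Suc k} = ins_at p (Suc k) ` perms k"
proof (rule set_eqI, rule iffI)
  fix w assume w: "w \<in> {w \<in> perms (Suc k). w!p = Suc k}"
  define v where "v = take p w @ drop (Suc p) w"
  have lw: "length w = Suc k" using w perms_length by auto
  have wv: "w = ins_at p (Suc k) v"
  proof -
    have "w = take p w @ w!p # drop (Suc p) w" using lw assms by (simp add: id_take_nth_drop)
    moreover have "take p v = take p w" "drop p v = drop (Suc p) w" unfolding v_def using lw assms by auto
    ultimately show ?thesis using w unfolding ins_at_def by simp
  qed
  have "distinct (ins_at p (Suc k) v)" "set (ins_at p (Suc k) v) = {1..Suc k}"
    using w wv unfolding perms_def by auto
  then have "distinct v" "Suc k \<notin> set v" "insert (Suc k) (set v) = {1..Suc k}"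
    by (simp_all add: distinct_ins_at set_ins_at)
  moreover have "{1..Suc k} = insert (Suc k) {1..k}" "Suc k \<notin> {1..k}" by auto
  ultimately have "set v = {1..k}" by (metis Diff_insert_absorb)
  then have "v \<in> perms k" using \<open>distinct v\<close> unfolding perms_def by simp
  then show "w \<in> ins_at p (Suc k) ` perms k" using wv by blast
next
  fix w assume "w \<in> ins_at p (Suc k) ` perms k"
  then obtain v where v: "v \<in> perms k" "w = ins_at p (Suc k) v" by blast
  then have "length v = k" "set v = {1..k}" "distinct v" using perms_length unfolding perms_def by auto
  then show "w \<in> {w \<in> perms (Suc k). w!p = Suc k}"
    using v(2) assms unfolding perms_def by (auto simp: set_ins_at distinct_ins_at nth_ins_at)
qed

lemma card_avoiders_max_at:
  assumes "p \<le> k"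
  shows "card {w \<in> perms (Suc k). w!p = Suc k \<and> avoids321 w \<and> P w}
       = card {v \<in> perms k. avoids321 v \<and> sorted (drop p v) \<and> P (ins_at p (Suc k) v)}"
    (is "card ?W = card ?V")
proof -
  have small: "v \<in> perms k \<Longrightarrow> p \<le> length v \<and> (\<forall>y\<in>set v. y < Suc k)" for v
    using assms perms_length unfolding perms_def by auto
  have "?W = ins_at p (Suc k) ` ?V"
  proof -
    have "?W = {w \<in> {w \<in> perms (Suc k). w!p = Suc k}. avoids321 w \<and> P w}" by blast
    also have "\<dots> = ins_at p (Suc k) ` ?V"
      unfolding perms_Suc_max_at[OF assms] using small avoids321_ins_at_max by auto
    finally show ?thesis .
  qed
  moreover have "inj_on (ins_at p (Suc k)) ?V"
    by (rule inj_on_subset[OF inj_ins_at]) (use small in auto)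
  ultimately show ?thesis by (simp add: card_image)
qed

lemma card_by_max_position:
  "card {w \<in> perms (Suc k). P w} = (\<Sum>p\<le>k. card {w \<in> perms (Suc k). w!p = Suc k \<and> P w})"
proof -
  let ?T = "\<lambda>p. {w \<in> perms (Suc k). w!p = Suc k \<and> P w}"
  have "{w \<in> perms (Suc k). P w} = (\<Union>p\<le>k. ?T p)"
  proof (rule set_eqI, rule iffI)
    fix w assume w: "w \<in> {w \<in> perms (Suc k). P w}"
    then have "Suc k \<in> set w" "length w = Suc k" using perms_length unfolding perms_def by auto
    then obtain p where "p \<le> k" "w!p = Suc k" by (metis in_set_conv_nth less_Suc_eq_le)
    then show "w \<in> (\<Union>p\<le>k. ?T p)" using w by auto
  qed auto
  moreover have "?T p \<inter> ?T q = {}" if "p \<le> k" "q \<le> k" "p \<noteq> q" for p q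
  proof -
    have "w!p \<noteq> w!q" if "w \<in> perms (Suc k)" for w
      using \<open>p \<le> k\<close> \<open>q \<le> k\<close> \<open>p \<noteq> q\<close> that perms_length[OF that] nth_eq_iff_index_eq
      unfolding perms_def by fastforce
    then show ?thesis by force
  qed
  moreover have "finite (?T p)" for p using finite_perms by simp
  ultimately show ?thesis by (simp add: card_UN_disjoint)
qed

section \<open>The Catalan count of 321-avoiders\<close>

lemma sorted_drop_snoc_max:
  assumes "\<forall>y\<in>set v. y < x"
  shows "sorted (drop q (v @ [x])) \<longleftrightarrow> sorted (drop q v)"
proof (cases "q \<le> length v")
  case True
  then have "drop q (v @ [x]) = drop q v @ [x]" by simp
  moreover have "\<forall>y\<in>set (drop q v). y \<le> x" using assms by (meson in_set_dropD less_imp_le)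
  ultimately show ?thesis by (simp add: sorted_append)
qed simp

lemma drop_ins_at_after:
  assumes "p < q" "p \<le> length v"
  shows "drop q (ins_at p x v) = drop (q - 1) v"
proof -
  obtain r where r: "q = Suc (p + r)" using assms less_iff_Suc_add by auto
  have "drop q (ins_at p x v) = drop r (drop p v)"
    using assms unfolding ins_at_def r by simp
  then show ?thesis unfolding r by (simp add: add.commute)
qed

lemma sorted_drop_ins_at_after:
  assumes "p < q" "p \<le> length v" "sorted (drop p v)"
  shows "sorted (drop q (ins_at p x v))"
proof -
  have "drop q (ins_at p x v) = drop (q - 1 - p) (drop p v)"
    using assms drop_ins_at_after by simp
  then show ?thesis using assms(3) by (metis sorted_wrt_drop)
qed

lemma not_sorted_drop_ins_at_max:
  assumes "q \<le> p" "p < length v" "\<forall>y\<in>set v. y < x"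
  shows "\<not> sorted (drop q (ins_at p x v))"
proof
  assume srt: "sorted (drop q (ins_at p x v))"
  let ?u = "ins_at p x v"
  have "?u ! p = x" "?u ! Suc p = v ! p" using assms(2) by (auto simp: nth_ins_at)
  moreover have "drop q ?u ! (p - q) \<le> drop q ?u ! (Suc p - q)"
    using srt[unfolded sorted_iff_nth_mono, rule_format, of "p - q" "Suc p - q"] assms(1,2)
    by (simp add: length_ins_at)
  ultimately have "x \<le> v ! p" using assms(1,2) by (simp add: length_ins_at Suc_diff_le)
  then show False using assms(2,3) nth_mem by fastforce
qed

definition avoiders_sorted_tail :: "nat \<Rightarrow> nat \<Rightarrow> nat list set" where
  "avoiders_sorted_tail n j = {w \<in> perms n. avoids321 w \<and> sorted (drop (n - j) w)}"

lemma tail_classes_by_max_position: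
  assumes q: "q \<le> k"
  defines "T p \<equiv> {v \<in> perms k. avoids321 v \<and> sorted (drop p v) \<and> sorted (drop q (ins_at p (Suc k) v))}"
  shows "T k = avoiders_sorted_tail k (k - q)"
    and "p < q \<Longrightarrow> T p = avoiders_sorted_tail k (k - p)"
    and "q \<le> p \<Longrightarrow> p < k \<Longrightarrow> T p = {}"
proof -
  have small: "length v = k" "\<forall>y\<in>set v. y < Suc k" if "v \<in> perms k" for v
    using that perms_length unfolding perms_def by auto
  have "sorted (drop k v) \<and> sorted (drop q (ins_at k (Suc k) v)) \<longleftrightarrow> sorted (drop q v)"
    if "v \<in> perms k" for v
  proof -
    have "ins_at k (Suc k) v = v @ [Suc k]" "drop k v = []" using small[OF that] unfolding ins_at_def by simp_all
    then show ?thesis using sorted_drop_snoc_max[OF small(2)[OF that]] by simp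
  qed
  then show "T k = avoiders_sorted_tail k (k - q)"
    unfolding T_def avoiders_sorted_tail_def using q by auto
  show "T p = avoiders_sorted_tail k (k - p)" if "p < q"
    unfolding T_def avoiders_sorted_tail_def
    using that q small sorted_drop_ins_at_after[of p q _ "Suc k"] by (auto simp: diff_diff_cancel)
  show "T p = {}" if "q \<le> p" "p < k"
    unfolding T_def using that small not_sorted_drop_ins_at_max[of q p _ "Suc k"] by fastforce
qed

lemma card_avoiders_sorted_tail_rec:
  assumes j: "1 \<le> j" "j \<le> Suc k"
  shows "card (avoiders_sorted_tail (Suc k) j)
       = card (avoiders_sorted_tail k (j-1)) + (\<Sum>p < Suc k - j. card (avoiders_sorted_tail k (k - p)))"
proof -
  define q where "q = Suc k - j"
  let ?T = "\<lambda>p. {v \<in> perms k. avoids321 v \<and> sorted (drop p v) \<and> sorted (drop q (ins_at p (Suc k) v))}"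
  have q: "q \<le> k" "k - q = j - 1" using j q_def by auto
  have "card (avoiders_sorted_tail (Suc k) j)
      = (\<Sum>p\<le>k. card {w \<in> perms (Suc k). w!p = Suc k \<and> avoids321 w \<and> sorted (drop q w)})"
    unfolding avoiders_sorted_tail_def q_def by (rule card_by_max_position)
  also have "\<dots> = (\<Sum>p\<le>k. card (?T p))"
    by (rule sum.cong) (simp_all add: card_avoiders_max_at)
  also have "\<dots> = card (?T k) + (\<Sum>p<q. card (?T p)) + (\<Sum>p\<in>{q..<k}. card (?T p))"
  proof -
    have "{..k} = insert k ({..<q} \<union> {q..<k})" "k \<notin> {..<q} \<union> {q..<k}" "{..<q} \<inter> {q..<k} = {}"
      using q by auto
    then show ?thesis by (simp add: sum.union_disjoint)
  qed
  also have "\<dots> = card (avoiders_sorted_tail k (j-1)) + (\<Sum>p<q. card (avoiders_sorted_tail k (k - p)))"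
    by (simp add: tail_classes_by_max_position[OF q(1)] q(2))
  finally show ?thesis unfolding q_def .
qed

lemma avoiders_sorted_tail_0_1: "avoiders_sorted_tail (Suc k) 0 = avoiders_sorted_tail (Suc k) 1"
proof -
  have "sorted (drop k w) \<and> drop (Suc k) w = []" if "w \<in> perms (Suc k)" for w
  proof -
    have "length (drop k w) = 1" using perms_length[OF that] by simp
    then obtain y where "drop k w = [y]" by (metis One_nat_def length_0_conv length_Suc_conv)
    then show ?thesis using perms_length[OF that] by simp
  qed
  then show ?thesis unfolding avoiders_sorted_tail_def by auto
qed

lemma card_avoiders_sorted_tail: "j \<le> n \<Longrightarrow> int (card (avoiders_sorted_tail n j)) = ballot n j"
proof (induction n arbitrary: j)
  case 0
  then have "avoiders_sorted_tail 0 j = {[]}"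
    unfolding avoiders_sorted_tail_def perms_def avoids321_def occ321_def by auto
  then show ?case using 0 by (simp add: ballot_def)
next
  case (Suc k)
  have pos: "int (card (avoiders_sorted_tail (Suc k) j)) = ballot (Suc k) j"
    if j: "1 \<le> j" "j \<le> Suc k" for j
  proof -
    have "int (card (avoiders_sorted_tail (Suc k) j))
        = ballot k (j-1) + (\<Sum>p < Suc k - j. ballot k (k - p))"
      using card_avoiders_sorted_tail_rec[OF j] Suc.IH j by simp
    also have "(\<Sum>p < Suc k - j. ballot k (k - p)) = (\<Sum>i = j..k. ballot k i)"
      by (rule sum.reindex_bij_witness[of _ "\<lambda>i. k - i" "\<lambda>p. k - p"]) (use j in auto)
    also have "ballot k (j-1) + (\<Sum>i = j..k. ballot k i) = (\<Sum>i = j-1..k. ballot k i)"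
      using j sum.atLeast_Suc_atMost[of "j-1" k "ballot k"] by simp
    also have "\<dots> = ballot (Suc k) j" using ballot_sum[of j "Suc k"] j by simp
    finally show ?thesis .
  qed
  show ?case
  proof (cases "j = 0")
    case True
    then show ?thesis using avoiders_sorted_tail_0_1 pos[of 1] ballot_0_1[of k] by simp
  next
    case False
    then show ?thesis using pos Suc.prems by simp
  qed
qed

theorem card_avoiders: "card {w \<in> perms n. avoids321 w} = catalan n"
proof -
  have "{w \<in> perms n. avoids321 w} = avoiders_sorted_tail n 0"
    unfolding avoiders_sorted_tail_def using perms_length by fastforce
  then have "int (card {w \<in> perms n. avoids321 w}) = int (catalan n)"
    using card_avoiders_sorted_tail[of 0 n] catalan_eq_ballot by simp
  then show ?thesis by simp
qed

section \<open>Avoiders by their last and first letter\<close>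

text \<open>Removing a final maximum is a bijection onto the 321-avoiders of length k.\<close>

lemma card_avoiders_last_max: "card {w \<in> perms (Suc k). avoids321 w \<and> last w = Suc k} = catalan k"
proof -
  have "last w = w!k" if "w \<in> perms (Suc k)" for w
    using perms_length[OF that] by (metis diff_Suc_1 last_conv_nth list.size(3) nat.distinct(1))
  then have "{w \<in> perms (Suc k). avoids321 w \<and> last w = Suc k}
           = {w \<in> perms (Suc k). w!k = Suc k \<and> avoids321 w \<and> True}" by auto
  also have "card \<dots> = card {v \<in> perms k. avoids321 v \<and> sorted (drop k v) \<and> True}"
    by (rule card_avoiders_max_at) simp
  also have "{v \<in> perms k. avoids321 v \<and> sorted (drop k v) \<and> True} = {v \<in> perms k. avoids321 v}"
    using perms_length by fastforce
  finally show ?thesis using card_avoiders by simp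
qed

lemma avoids321_Cons_min:
  assumes "\<forall>y\<in>set v. x < y"
  shows "avoids321 (x # v) \<longleftrightarrow> avoids321 v"
proof -
  have "(i,j,k) \<in> occ321 (x # v) \<longleftrightarrow> 0 < i \<and> (i-1, j-1, k-1) \<in> occ321 v" for i j k
  proof (cases i)
    case 0
    have "\<not> x > v ! (j-1)" if "j - 1 < length v" using assms that nth_mem by fastforce
    then show ?thesis using 0 unfolding occ321_def by auto
  qed (auto simp: occ321_def)
  moreover have "(i,j,k) \<in> occ321 v \<Longrightarrow> (Suc i, Suc j, Suc k) \<in> occ321 (x # v)" for i j k
    unfolding occ321_def by auto
  ultimately show ?thesis unfolding avoids321_def by fastforce
qed

text \<open>Removing an initial 1 and lowering all letters by one is a bijection onto the avoiders of length k.\<close>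

lemma card_avoiders_hd_one: "card {w \<in> perms (Suc k). avoids321 w \<and> hd w = 1} = catalan k"
proof -
  let ?V = "{v. distinct v \<and> set v = {1+1..1+k} \<and> avoids321 v}"
  have "{w \<in> perms (Suc k). avoids321 w \<and> hd w = 1} = Cons 1 ` ?V"
  proof (rule set_eqI, rule iffI)
    fix w assume w: "w \<in> {w \<in> perms (Suc k). avoids321 w \<and> hd w = 1}"
    then obtain v where v: "w = 1 # v" using perms_length by (cases w) fastforce+
    then have "distinct v" "1 \<notin> set v" "insert 1 (set v) = {1..Suc k}" using w unfolding perms_def by auto
    moreover have "{1..Suc k} = insert 1 {1+1..1+k}" "1 \<notin> {1+1..1+k}" by auto
    ultimately have "set v = {1+1..1+k}" by (metis Diff_insert_absorb)
    moreover have "avoids321 v"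
      using w v avoids321_Cons_min[of v 1] \<open>set v = {1+1..1+k}\<close> by auto
    ultimately show "w \<in> Cons 1 ` ?V" using v \<open>distinct v\<close> by blast
  next
    fix w assume "w \<in> Cons 1 ` ?V"
    then obtain v where v: "v \<in> ?V" "w = 1 # v" by blast
    moreover have "{1..Suc k} = insert 1 {1+1..1+k}" by auto
    ultimately show "w \<in> {w \<in> perms (Suc k). avoids321 w \<and> hd w = 1}"
      unfolding perms_def using avoids321_Cons_min[of v 1] by auto
  qed
  then have "card {w \<in> perms (Suc k). avoids321 w \<and> hd w = 1} = card ?V"
    by (simp add: card_image)
  also have "\<dots> = card {v \<in> perms k. avoids321 (map (\<lambda>x. x + 1) v)}"
    by (rule card_shifted_perms)
  also have "\<dots> = card {v \<in> perms k. avoids321 v}"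
    by (simp only: avoids321_shift)
  finally show ?thesis using card_avoiders by simp
qed

lemma int_card_filter_not:
  "finite A \<Longrightarrow> int (card {x \<in> A. \<not> P x}) = int (card A) - int (card {x \<in> A. P x})"
  using card_Int_Diff[of A "{x. P x}"] by (simp add: set_diff_eq Int_def)

lemma card_avoiders_last_not_max:
  assumes "1 \<le> m"
  shows "int (card {w \<in> perms m. avoids321 w \<and> last w \<noteq> m}) = int (catalan m) - int (catalan (m - 1))"
proof -
  obtain k where m: "m = Suc k" using assms by (cases m) auto
  have "{w \<in> perms m. avoids321 w \<and> last w \<noteq> m} = {w \<in> {w \<in> perms m. avoids321 w}. \<not> last w = m}"
    "{w \<in> {w \<in> perms m. avoids321 w}. last w = m} = {w \<in> perms m. avoids321 w \<and> last w = m}" by auto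
  then show ?thesis using int_card_filter_not[of "{w \<in> perms m. avoids321 w}"] finite_perms
      card_avoiders card_avoiders_last_max unfolding m by simp
qed

lemma card_avoiders_hd_not_one:
  assumes "1 \<le> m"
  shows "int (card {w \<in> perms m. avoids321 w \<and> hd w \<noteq> 1}) = int (catalan m) - int (catalan (m - 1))"
proof -
  obtain k where m: "m = Suc k" using assms by (cases m) auto
  have "{w \<in> perms m. avoids321 w \<and> hd w \<noteq> 1} = {w \<in> {w \<in> perms m. avoids321 w}. \<not> hd w = 1}"
    "{w \<in> {w \<in> perms m. avoids321 w}. hd w = 1} = {w \<in> perms m. avoids321 w \<and> hd w = 1}" by auto
  then show ?thesis using int_card_filter_not[of "{w \<in> perms m. avoids321 w}"] finite_perms
      card_avoiders card_avoiders_hd_one unfolding m by simp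
qed

section \<open>Words with exactly one 321 around a pivot\<close>

text \<open>Throughout, u @ x # v is a word whose pivot x is exceeded by exactly one letter of u (at position i)
  and exceeds exactly one letter of v (at position k).\<close>

definition one_above :: "nat list \<Rightarrow> nat \<Rightarrow> nat \<Rightarrow> bool" where
  "one_above u x i \<longleftrightarrow> i < length u \<and> x < u!i \<and> (\<forall>p < length u. p \<noteq> i \<longrightarrow> u!p < x)"

definition one_below :: "nat list \<Rightarrow> nat \<Rightarrow> nat \<Rightarrow> bool" where
  "one_below v x k \<longleftrightarrow> k < length v \<and> v!k < x \<and> (\<forall>r < length v. r \<noteq> k \<longrightarrow> x < v!r)"

lemma nth_glued:
  "(u @ x # v) ! t = (if t < length u then u!t else if t = length u then x else v!(t - Suc (length u)))"
  by (simp add: nth_append nth_Cons')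

lemma occ321_glued_middle_not_left:
  assumes up: "one_above u x i" and dn: "one_below v x k" and av: "avoids321 (u @ [v!k])"
    and o: "(p,q,r) \<in> occ321 (u @ x # v)" and q: "q < length u"
  shows False
proof -
  let ?w = "u @ x # v" and ?m = "length u"
  have o': "p < q" "q < r" "r < Suc (?m + length v)" "?w!p > ?w!q" "?w!q > ?w!r"
    using o unfolding occ321_def by auto
  have uq: "u!q < u!p" using o' q by (simp add: nth_glued)
  have "q \<noteq> i" using up uq o' q unfolding one_above_def by (metis less_trans not_less_iff_gr_or_eq)
  then have "u!q < x" using up q unfolding one_above_def by blast
  consider "r < ?m" | "r = Suc (?m + k)"
  proof (cases "r < ?m")
    case False
    then have "?m < r" using o' q \<open>u!q < x\<close> by (auto simp: nth_glued split: if_split_asm)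
    then have "v!(r - Suc ?m) < x" using o' q \<open>u!q < x\<close> by (auto simp: nth_glued)
    moreover have "r - Suc ?m < length v" using o'(3) \<open>?m < r\<close> by linarith
    ultimately have "r - Suc ?m = k" using dn unfolding one_below_def by (meson less_not_sym)
    then show ?thesis using \<open>?m < r\<close> that by simp
  qed
  then have "(p, q, if r < ?m then r else ?m) \<in> occ321 (u @ [v!k])"
    using o' q unfolding occ321_def by cases (auto simp: nth_glued nth_append)
  then show False using av unfolding avoids321_def by blast
qed

lemma occ321_glued_middle_not_right:
  assumes up: "one_above u x i" and dn: "one_below v x k" and av: "avoids321 (u!i # v)"
    and o: "(p,q,r) \<in> occ321 (u @ x # v)" and q: "length u < q"
  shows False
proof -
  let ?w = "u @ x # v" and ?m = "length u"
  have o': "p < q" "q < r" "r < Suc (?m + length v)" "?w!p > ?w!q" "?w!q > ?w!r"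
    using o unfolding occ321_def by auto
  define q' r' where "q' = q - Suc ?m" and "r' = r - Suc ?m"
  have vqr: "v!r' < v!q'" "q' < r'" "r' < length v" using o' q unfolding q'_def r'_def by (auto simp: nth_glued)
  have "q' \<noteq> k"
  proof
    assume "q' = k"
    then have "v!r' < x" using dn vqr unfolding one_below_def by simp
    then show False using dn vqr \<open>q' = k\<close> unfolding one_below_def by auto
  qed
  then have "x < v!q'" using dn vqr unfolding one_below_def by simp
  have wq: "?w!q = v!q'" using q unfolding q'_def by (simp add: nth_glued)
  consider "p = i" | "?m < p"
  proof (cases "p < ?m")
    case True
    then have "x < u!p" using o' wq \<open>x < v!q'\<close> by (simp add: nth_glued)
    then show ?thesis using up True that unfolding one_above_def by fastforce
  next
    case False
    then have "p \<noteq> ?m" using o' wq \<open>x < v!q'\<close> by (auto simp: nth_glued)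
    then show ?thesis using False that by simp
  qed
  moreover have "i < ?m" using up unfolding one_above_def by simp
  ultimately have "(if p = i then 0 else Suc (p - Suc ?m), Suc q', Suc r') \<in> occ321 (u!i # v)"
    using o' q vqr wq unfolding occ321_def q'_def r'_def
    by cases (auto simp: nth_glued)
  then show False using av unfolding avoids321_def by blast
qed

lemma occ321_glued_if:
  assumes up: "one_above u x i" and dn: "one_below v x k"
    and avL: "avoids321 (u @ [v!k])" and avR: "avoids321 (u!i # v)"
  shows "occ321 (u @ x # v) = {(i, length u, Suc (length u + k))}"
proof (rule set_eqI, rule iffI)
  fix t assume t: "t \<in> occ321 (u @ x # v)"
  obtain p q r where pqr: "t = (p,q,r)" by (cases t)
  have "q = length u"
    using occ321_glued_middle_not_left[OF up dn avL] occ321_glued_middle_not_right[OF up dn avR] t pqr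
    by (metis linorder_neqE_nat)
  then have o: "p < length u" "length u < r" "r < Suc (length u + length v)" "x < u!p" "v!(r - Suc (length u)) < x"
    using t pqr unfolding occ321_def by (auto simp: nth_glued)
  then have "p = i" using up unfolding one_above_def by (meson less_not_sym)
  moreover have "r - Suc (length u) < length v" using o(2,3) by linarith
  then have "r - Suc (length u) = k" using o(5) dn unfolding one_below_def by (meson less_not_sym)
  ultimately show "t \<in> {(i, length u, Suc (length u + k))}" using pqr \<open>q = length u\<close> o by auto
next
  fix t assume "t \<in> {(i, length u, Suc (length u + k))}"
  then show "t \<in> occ321 (u @ x # v)"
    using up dn unfolding one_above_def one_below_def occ321_def by (auto simp: nth_glued)
qed

text \<open>Conversely, a 321 in either part yields a second occurrence in the whole word.\<close>

lemma avoids321_parts_of_glued: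
  assumes up: "one_above u x i" and dn: "one_below v x k"
    and occ: "occ321 (u @ x # v) = {(i, length u, Suc (length u + k))}"
  shows "avoids321 (u @ [v!k])" and "avoids321 (u!i # v)"
proof -
  let ?m = "length u" and ?w = "u @ x # v"
  have k: "k < length v" and i: "i < ?m" using up dn unfolding one_above_def one_below_def by auto
  show "avoids321 (u @ [v!k])" unfolding avoids321_def
  proof (rule ccontr)
    assume "occ321 (u @ [v!k]) \<noteq> {}"
    then obtain p q r where o: "(p,q,r) \<in> occ321 (u @ [v!k])" by auto
    define e where "e t = (if t < ?m then t else Suc (?m + k))" for t
    have e: "t \<le> ?m \<Longrightarrow> ?w ! e t = (u @ [v!k]) ! t" for t
      unfolding e_def by (simp add: nth_glued nth_append)
    have pqr: "p < q" "q < r" "r \<le> ?m" using o unfolding occ321_def by auto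
    then have "e p = p" "e q = q" "q < e r" "e r < length ?w" using k by (auto simp: e_def)
    then have "(e p, e q, e r) \<in> occ321 ?w"
      using o e[of p] e[of q] e[of r] pqr unfolding occ321_def by simp
    then show False using occ \<open>e q = q\<close> pqr by auto
  qed
  show "avoids321 (u!i # v)" unfolding avoids321_def
  proof (rule ccontr)
    assume "occ321 (u!i # v) \<noteq> {}"
    then obtain p q r where o: "(p,q,r) \<in> occ321 (u!i # v)" by auto
    define e where "e t = (if t = 0 then i else ?m + t)" for t
    have e: "?w ! e t = (u!i # v) ! t" for t
      unfolding e_def using i by (simp add: nth_glued nth_Cons')
    have pqr: "p < q" "q < r" "r \<le> length v" using o unfolding occ321_def by auto
    then have "e p < e q" "e q < e r" "e r < length ?w" "e q = ?m + q" "0 < q"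
      using i by (auto simp: e_def)
    then have "(e p, e q, e r) \<in> occ321 ?w"
      using o e[of p] e[of q] e[of r] pqr unfolding occ321_def by (simp add: nth_Cons')
    then show False using occ \<open>e q = ?m + q\<close> \<open>0 < q\<close> by auto
  qed
qed

lemma occ321_glued:
  assumes "one_above u x i" "one_below v x k"
  shows "occ321 (u @ x # v) = {(i, length u, Suc (length u + k))}
         \<longleftrightarrow> avoids321 (u @ [v!k]) \<and> avoids321 (u!i # v)"
  using occ321_glued_if[OF assms] avoids321_parts_of_glued[OF assms] by blast

lemma Max_one_above:
  assumes "one_above u x i"
  shows "Max (set u) = u!i"
proof (rule Max_eqI)
  show "u!i \<in> set u" using assms unfolding one_above_def by simp
  fix y assume "y \<in> set u"
  then obtain p where "p < length u" "y = u!p" by (auto simp: in_set_conv_nth)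
  then show "y \<le> u!i" using assms unfolding one_above_def by (cases "p = i") auto
qed simp

lemma Min_one_below:
  assumes "one_below v x k"
  shows "Min (set v) = v!k"
proof (rule Min_eqI)
  show "v!k \<in> set v" using assms unfolding one_below_def by simp
  fix y assume "y \<in> set v"
  then obtain r where "r < length v" "y = v!r" by (auto simp: in_set_conv_nth)
  then show "v!k \<le> y" using assms unfolding one_below_def by (cases "r = k") auto
qed simp

lemma one_above_others:
  assumes "one_above u x i" "z \<in> set u" "z \<noteq> u!i"
  shows "z < x"
  using assms unfolding one_above_def by (metis in_set_conv_nth)

lemma one_below_others:
  assumes "one_below v x k" "z \<in> set v" "z \<noteq> v!k"
  shows "x < z"
  using assms unfolding one_below_def by (metis in_set_conv_nth)

section \<open>Structure of permutations containing 321 exactly once\<close>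

lemma occ321_singleton:
  assumes "occ321 w = {(i, j, k)}"
  shows "i < j" "j < k" "k < length w" "w!j < w!i" "w!k < w!j"
proof -
  have "(i, j, k) \<in> occ321 w" using assms by simp
  then show "i < j" "j < k" "k < length w" "w!j < w!i" "w!k < w!j" unfolding occ321_def by auto
qed

lemma once_neighbours:
  assumes w: "w \<in> perms n" and occ: "occ321 w = {(i,j,k)}"
  shows "\<And>p. p < j \<Longrightarrow> p \<noteq> i \<Longrightarrow> w!p < w!j"
    and "\<And>r. j < r \<Longrightarrow> r < n \<Longrightarrow> r \<noteq> k \<Longrightarrow> w!j < w!r"
proof -
  have l: "length w = n" using w perms_length by simp
  note ijk = occ321_singleton[OF occ, unfolded l]
  have "distinct w" using w unfolding perms_def by simp
  then have neq: "w!p \<noteq> w!q" if "p < n" "q < n" "p \<noteq> q" for p q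
    using l that by (simp add: nth_eq_iff_index_eq)
  show "w!p < w!j" if "p < j" "p \<noteq> i" for p
  proof (rule ccontr)
    assume "\<not> w!p < w!j"
    then have "(p,j,k) \<in> occ321 w" using neq[of p j] that ijk l unfolding occ321_def by auto
    then show False using occ that by auto
  qed
  show "w!j < w!r" if "j < r" "r < n" "r \<noteq> k" for r
  proof (rule ccontr)
    assume "\<not> w!j < w!r"
    then have "(i,j,r) \<in> occ321 w" using neq[of r j] that ijk l unfolding occ321_def by auto
    then show False using occ that by auto
  qed
qed

lemma perms_nth_eq_rank:
  assumes w: "w \<in> perms n" and p: "p < n"
  shows "w!p = Suc (card {q. q < n \<and> w!q < w!p})"
proof -
  let ?I = "{q. q < n \<and> w!q < w!p}"
  have l: "length w = n" and d: "distinct w" and s: "set w = {1..n}"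
    using w perms_length unfolding perms_def by auto
  have "nth w ` ?I = {1..<w!p}"
  proof (rule set_eqI, rule iffI)
    fix y assume "y \<in> nth w ` ?I"
    then obtain q where "q < n" "w!q < w!p" "y = w!q" by auto
    then show "y \<in> {1..<w!p}" using s l nth_mem[of q w] by auto
  next
    fix y assume y: "y \<in> {1..<w!p}"
    have "w!p \<le> n" using s l p nth_mem[of p w] by auto
    then have "y \<in> set w" using y s by auto
    then obtain q where "q < n" "w!q = y" using l by (auto simp: in_set_conv_nth)
    then show "y \<in> nth w ` ?I" using y by force
  qed
  moreover have "inj_on (nth w) ?I" using inj_on_nth[OF d, of ?I] l by auto
  ultimately have "card ?I = w!p - 1" by (metis card_atLeastLessThan card_image)
  moreover have "1 \<le> w!p" using s l p nth_mem[of p w] by auto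
  ultimately show ?thesis by simp
qed

lemma once_middle_value:
  assumes w: "w \<in> perms n" and occ: "occ321 w = {(i,j,k)}"
  shows "w!j = Suc j"
proof -
  note ijk = occ321_singleton[OF occ, unfolded perms_length[OF w]]
  have smaller: "{q. q < n \<and> w!q < w!j} = insert k ({..<j} - {i})"
  proof (rule set_eqI, rule iffI)
    fix q assume q: "q \<in> {q. q < n \<and> w!q < w!j}"
    consider "q < j" | "q = j" | "j < q" by linarith
    then show "q \<in> insert k ({..<j} - {i})"
    proof cases
      case 3
      then show ?thesis using q once_neighbours(2)[OF w occ, of q] by force
    qed (use q ijk in auto)
  qed (use once_neighbours(1)[OF w occ] ijk in auto)
  have "card (insert k ({..<j} - {i})) = j" using ijk by simp
  then show ?thesis using perms_nth_eq_rank[OF w, of j] ijk unfolding smaller by simp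
qed

section \<open>Glueing two avoiders and splitting a permutation with one 321\<close>

definition repl :: "nat \<Rightarrow> nat \<Rightarrow> nat \<Rightarrow> nat" where
  "repl x y z = (if z = x then y else z)"

lemma map_repl_cancel: "y \<notin> set xs \<Longrightarrow> map (repl y x) (map (repl x y) xs) = xs"
  by (induction xs) (auto simp: repl_def)

lemma inj_on_repl: "y \<notin> S \<Longrightarrow> inj_on (repl x y) S"
  by (auto simp: inj_on_def repl_def)

lemma strict_mono_on_repl_max:
  assumes "\<forall>z\<in>S. z \<le> x" "\<forall>z\<in>S. z \<noteq> x \<longrightarrow> z < y"
  shows "strict_mono_on S (repl x y)"
  using assms by (auto simp: strict_mono_on_def repl_def)

lemma strict_mono_on_repl_min:
  assumes "\<forall>z\<in>S. x \<le> z" "\<forall>z\<in>S. z \<noteq> x \<longrightarrow> y < z"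
  shows "strict_mono_on S (repl x y)"
  using assms by (auto simp: strict_mono_on_def repl_def)

lemma one_above_butlast_repl:
  assumes "distinct L" "\<forall>z\<in>set L. z \<le> x" "i < length L - 1" "L!i = x" "x < y"
  shows "one_above (butlast (map (repl x y) L)) x i"
proof -
  have lt: "L!p < x" if "p < length L - 1" "p \<noteq> i" for p
  proof -
    have "L!p \<noteq> x" using assms(1,3,4) that nth_eq_iff_index_eq[of L p i] by auto
    moreover have "L!p \<le> x" using assms(2) that by simp
    ultimately show ?thesis by simp
  qed
  show ?thesis using assms(3-5) lt unfolding one_above_def
    by (auto simp: nth_butlast repl_def) (metis less_irrefl)
qed

lemma one_below_tl_repl:
  assumes "distinct R" "\<forall>z\<in>set R. x \<le> z" "Suc k < length R" "R!Suc k = x" "y < x"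
  shows "one_below (tl (map (repl x y) R)) x k"
proof -
  have gt: "x < R!Suc r" if "r < length R - 1" "r \<noteq> k" for r
  proof -
    have "R!Suc r \<noteq> x" using assms(1,3,4) that nth_eq_iff_index_eq[of R "Suc r" "Suc k"] by auto
    moreover have "x \<le> R!Suc r" using assms(2) that by simp
    ultimately show ?thesis by simp
  qed
  show ?thesis using assms(3-5) gt unfolding one_below_def
    by (auto simp: nth_tl repl_def) (metis less_irrefl)
qed

text \<open>Glue L on {1..b} and R on {b..n}: drop the last letter a of L and the first letter c of R,
  rename b to c in L and b to a in R, and put b in between.\<close>

definition glue :: "nat \<Rightarrow> nat list \<Rightarrow> nat list \<Rightarrow> nat list" where
  "glue b L R = butlast (map (repl b (hd R)) L) @ b # tl (map (repl b (last L)) R)"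

text \<open>The inverse: with c the largest letter before position b - 1 and a the smallest letter after it,
  L is the prefix followed by a, and R is c followed by the suffix, with c resp. a renamed b.\<close>

definition split_left :: "nat \<Rightarrow> nat list \<Rightarrow> nat list" where
  "split_left b w = map (repl (Max (set (take (b-1) w))) b) (take (b-1) w @ [Min (set (drop b w))])"

definition split_right :: "nat \<Rightarrow> nat list \<Rightarrow> nat list" where
  "split_right b w = map (repl (Min (set (drop b w))) b) (Max (set (take (b-1) w)) # drop b w)"

definition left_factors :: "nat \<Rightarrow> nat list set" where
  "left_factors b = {L \<in> perms b. avoids321 L \<and> last L \<noteq> b}"

definition right_factors :: "nat \<Rightarrow> nat \<Rightarrow> nat list set" where
  "right_factors n b = {R. distinct R \<and> set R = {b..n} \<and> avoids321 R \<and> hd R \<noteq> b}"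

locale glue_data =
  fixes n b :: nat and L R :: "nat list"
  assumes b: "2 \<le> b" "b < n" and L: "L \<in> left_factors b" and R: "R \<in> right_factors n b"
begin

abbreviation "a \<equiv> last L"
abbreviation "c \<equiv> hd R"
abbreviation "u \<equiv> butlast (map (repl b c) L)"
abbreviation "v \<equiv> tl (map (repl b a) R)"

lemma L_props: "L \<in> perms b" "avoids321 L" "a \<noteq> b"
  using L unfolding left_factors_def by auto

lemma R_props: "distinct R" "set R = {b..n}" "avoids321 R" "c \<noteq> b"
  using R unfolding right_factors_def by auto

lemma length_L: "length L = b" and length_R: "length R = Suc (n - b)"
proof -
  show "length L = b" using L_props(1) by (rule perms_length)
  have "length R = card {b..n}" using R_props(1,2) distinct_card by force
  then show "length R = Suc (n - b)" using b by simp
qed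

lemma L_nonempty: "L \<noteq> []" and R_nonempty: "R \<noteq> []"
  using length_L length_R b by auto

lemma a_range: "1 \<le> a" "a < b"
proof -
  have "a \<in> set L" using L_nonempty by simp
  then show "1 \<le> a" "a < b" using L_props(1,3) unfolding perms_def by auto
qed

lemma c_range: "b < c" "c \<le> n"
proof -
  have "c \<in> set R" using R_nonempty by simp
  then show "b < c" "c \<le> n" using R_props(2,4) by auto
qed

lemma c_notin_L: "c \<notin> set L" and a_notin_R: "a \<notin> set R"
  using L_props(1) R_props(2) a_range c_range unfolding perms_def by auto

lemma u_snoc: "u @ [a] = map (repl b c) L"
proof -
  have "u @ [last (map (repl b c) L)] = map (repl b c) L"
    using L_nonempty by simp
  then show ?thesis using L_nonempty a_range by (simp add: last_map repl_def)
qed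

lemma v_cons: "c # v = map (repl b a) R"
  using R_nonempty c_range by (cases R) (auto simp: repl_def)

lemma avoids_u_snoc: "avoids321 (u @ [a])"
proof -
  have "\<forall>z\<in>set L. z \<le> b" "\<forall>z\<in>set L. z \<noteq> b \<longrightarrow> z < c"
    using L_props(1) c_range unfolding perms_def by auto
  then show ?thesis unfolding u_snoc using L_props(2)
    by (simp add: avoids321_map_strict_mono strict_mono_on_repl_max)
qed

lemma avoids_v_cons: "avoids321 (c # v)"
proof -
  have "\<forall>z\<in>set R. b \<le> z" "\<forall>z\<in>set R. z \<noteq> b \<longrightarrow> a < z"
    using R_props(2) a_range by auto
  then show ?thesis unfolding v_cons using R_props(3)
    by (simp add: avoids321_map_strict_mono strict_mono_on_repl_min)
qed

text \<open>The glued word has the pivot shape: the letter c sits where b was in L, the letter a where b was in R.\<close>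

lemma exists_one_above: "\<exists>i. one_above u b i \<and> u!i = c"
proof -
  have "b \<in> set L" using L_props(1) b unfolding perms_def by auto
  then obtain i where i: "i < b" "L!i = b" using length_L by (auto simp: in_set_conv_nth)
  have "a = L!(b - 1)" using L_nonempty length_L by (simp add: last_conv_nth)
  then have "i \<noteq> b - 1" using i L_props(3) by auto
  then have "i < length L - 1" using i length_L by simp
  then have "one_above u b i" "u!i = c"
    using one_above_butlast_repl[of L b i c] L_props(1) i c_range
    unfolding perms_def by (auto simp: nth_butlast repl_def)
  then show ?thesis by blast
qed

lemma exists_one_below: "\<exists>k. one_below v b k \<and> v!k = a"
proof -
  have "b \<in> set R" using R_props(2) b by auto
  then obtain s where s: "s < length R" "R!s = b" by (auto simp: in_set_conv_nth)
  have "c = R!0" using R_nonempty by (simp add: hd_conv_nth)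
  have "s \<noteq> 0"
  proof
    assume "s = 0"
    then show False using \<open>c = R!0\<close> s(2) R_props(4) by simp
  qed
  then obtain k where k: "s = Suc k" using not0_implies_Suc by blast
  then have "one_below v b k" "v!k = a"
    using one_below_tl_repl[of R b k a] R_props(1,2) s a_range by (auto simp: nth_tl repl_def)
  then show ?thesis by blast
qed

lemma glue_eq: "glue b L R = u @ b # v"
  unfolding glue_def ..

lemma length_u: "length u = b - 1"
  using length_L by simp

lemma glue_occ321: "\<exists>i k. occ321 (glue b L R) = {(i, b - 1, k)}"
proof -
  obtain i k where up: "one_above u b i" "u!i = c" and dn: "one_below v b k" "v!k = a"
    using exists_one_above exists_one_below by blast
  then have "occ321 (u @ b # v) = {(i, length u, Suc (length u + k))}"
    using occ321_glued[OF up(1) dn(1)] avoids_u_snoc avoids_v_cons by simp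
  then show ?thesis unfolding glue_eq length_u by blast
qed

lemma glue_perm: "glue b L R \<in> perms n"
proof (rule perms_intro)
  have dL: "distinct (u @ [a])" unfolding u_snoc
    using L_props(1) c_notin_L inj_on_repl unfolding perms_def by (simp add: distinct_map)
  have dR: "distinct (c # v)" unfolding v_cons
    using R_props(1) a_notin_R inj_on_repl by (simp add: distinct_map)
  have "set (u @ [a]) \<subseteq> {1..<b} \<union> {c}" unfolding u_snoc
    using L_props(1) unfolding perms_def by (auto simp: repl_def)
  then have su: "set u \<subseteq> {1..<b} \<union> {c}" by simp
  have "set (c # v) \<subseteq> {a} \<union> {b<..n}" unfolding v_cons
    using R_props(2) by (auto simp: repl_def)
  then have sv: "set v \<subseteq> {a} \<union> {b<..n}" by simp
  have "set u \<inter> set v = {}"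
  proof -
    have False if "x \<in> set u" "x \<in> set v" for x
    proof -
      have "x \<in> {1..<b} \<union> {c}" "x \<in> {a} \<union> {b<..n}" using that su sv by blast+
      then show False using that dL dR a_range c_range by auto
    qed
    then show ?thesis by blast
  qed
  then show "distinct (glue b L R)" unfolding glue_eq
    using dL dR su sv a_range c_range by auto
  show "set (glue b L R) \<subseteq> {1..n}" unfolding glue_eq
    using su sv a_range c_range b by auto
  show "length (glue b L R) = n" unfolding glue_eq using length_u length_R b by simp
qed

lemma split_glue: "split_left b (glue b L R) = L" "split_right b (glue b L R) = R"
proof -
  obtain i k where up: "one_above u b i" "u!i = c" and dn: "one_below v b k" "v!k = a"
    using exists_one_above exists_one_below by blast
  have tk: "take (b-1) (glue b L R) = u" "drop b (glue b L R) = v"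
    unfolding glue_eq using length_u b by (simp_all add: Suc_diff_1[symmetric])
  have mm: "Max (set u) = c" "Min (set v) = a"
    using Max_one_above[OF up(1)] Min_one_below[OF dn(1)] up(2) dn(2) by simp_all
  show "split_left b (glue b L R) = L"
    unfolding split_left_def tk mm u_snoc using c_notin_L by (rule map_repl_cancel)
  show "split_right b (glue b L R) = R"
    unfolding split_right_def tk mm v_cons using a_notin_R by (rule map_repl_cancel)
qed

end

locale split_data =
  fixes n :: nat and w :: "nat list" and i j k :: nat
  assumes w: "w \<in> perms n" and occ: "occ321 w = {(i, j, k)}"
begin

abbreviation "b \<equiv> Suc j"
abbreviation "u \<equiv> take j w"
abbreviation "v \<equiv> drop b w"
abbreviation "c \<equiv> u!i"
abbreviation "a \<equiv> v!(k - b)"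

lemma length_w: "length w = n" using w by (rule perms_length)

lemmas ijk = occ321_singleton[OF occ, unfolded length_w]

lemma w_eq: "w = u @ b # v"
  using id_take_nth_drop[of j w] once_middle_value[OF w occ] ijk length_w by simp

lemma length_u: "length u = j" and length_v: "length v = n - b"
  using ijk length_w by auto

lemma one_above_u: "one_above u b i"
  unfolding one_above_def using ijk once_neighbours(1)[OF w occ] once_middle_value[OF w occ] length_w
  by (simp add: length_u)

lemma one_below_v: "one_below v b (k - b)"
proof -
  have "b < v!r" if "r < length v" "r \<noteq> k - b" for r
    using that ijk once_neighbours(2)[OF w occ, of "b + r"] once_middle_value[OF w occ] length_w by simp
  then show ?thesis unfolding one_below_def using ijk once_middle_value[OF w occ] length_w by simp
qed

lemma a_in_v: "a \<in> set v" and c_in_u: "c \<in> set u"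
proof -
  show "a \<in> set v" by (rule nth_mem) (use ijk length_v in simp)
  show "c \<in> set u" by (rule nth_mem) (use ijk length_u in simp)
qed

lemma avoids_parts: "avoids321 (u @ [a])" "avoids321 (c # v)"
proof -
  have "occ321 (u @ b # v) = {(i, length u, Suc (length u + (k - b)))}"
    unfolding w_eq[symmetric] length_u using occ ijk by simp
  then show "avoids321 (u @ [a])" "avoids321 (c # v)"
    using occ321_glued[OF one_above_u one_below_v] by simp_all
qed

lemma distinct_parts: "distinct (u @ [a])" "distinct (c # v)" "b \<notin> set (u @ [a])" "b \<notin> set (c # v)"
proof -
  have d: "distinct (u @ b # v)" using w unfolding w_eq[symmetric] perms_def by simp
  then show "distinct (u @ [a])" "distinct (c # v)" "b \<notin> set (u @ [a])" "b \<notin> set (c # v)"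
    using d a_in_v c_in_u by auto
qed

lemma values_parts: "set (u @ [a]) \<subseteq> {1..n}" "set (c # v) \<subseteq> {1..n}"
proof -
  have "set (u @ b # v) = {1..n}" using w unfolding w_eq[symmetric] perms_def by simp
  then show "set (u @ [a]) \<subseteq> {1..n}" "set (c # v) \<subseteq> {1..n}" using a_in_v c_in_u by auto
qed

lemma split_eqs:
  "split_left b w = map (repl c b) (u @ [a])" "split_right b w = map (repl a b) (c # v)"
  unfolding split_left_def split_right_def
  using Max_one_above[OF one_above_u] Min_one_below[OF one_below_v] by simp_all

lemma order_parts: "a < b" "b < c" "\<forall>z\<in>set (u @ [a]). z \<noteq> c \<longrightarrow> z < b"
  "\<forall>z\<in>set (c # v). z \<noteq> a \<longrightarrow> b < z"
  using one_above_u one_below_v one_above_others[OF one_above_u] one_below_others[OF one_below_v]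
  unfolding one_above_def one_below_def by auto

lemma split_left_factor: "split_left b w \<in> left_factors b"
proof -
  have mono: "strict_mono_on (set (u @ [a])) (repl c b)"
    by (rule strict_mono_on_repl_max) (use order_parts in fastforce)+
  have "map (repl c b) (u @ [a]) \<in> perms b"
  proof (rule perms_intro)
    show "distinct (map (repl c b) (u @ [a]))"
      using distinct_parts(1) inj_on_repl[OF distinct_parts(3)] distinct_map by blast
    show "length (map (repl c b) (u @ [a])) = b" using length_u by simp
    show "set (map (repl c b) (u @ [a])) \<subseteq> {1..b}"
      using order_parts values_parts by (fastforce simp: repl_def)
  qed
  moreover have "last (map (repl c b) (u @ [a])) = a" using order_parts by (simp add: repl_def)
  ultimately show ?thesis unfolding left_factors_def split_eqs
    using avoids_parts order_parts avoids321_map_strict_mono[OF mono] by simp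
qed

lemma split_right_factor: "split_right b w \<in> right_factors n b"
proof -
  have mono: "strict_mono_on (set (c # v)) (repl a b)"
    by (rule strict_mono_on_repl_min) (use order_parts in fastforce)+
  have d: "distinct (map (repl a b) (c # v))"
    using distinct_parts(2) inj_on_repl[OF distinct_parts(4)] distinct_map by blast
  have "set (map (repl a b) (c # v)) = {b..n}"
  proof (rule distinct_set_eq_card[OF d])
    show "set (map (repl a b) (c # v)) \<subseteq> {b..n}"
      using order_parts values_parts by (fastforce simp: repl_def)
    show "length (map (repl a b) (c # v)) = card {b..n}" using length_v ijk by simp
  qed simp
  moreover have "hd (map (repl a b) (c # v)) = c" using order_parts by (simp add: repl_def)
  ultimately show ?thesis unfolding right_factors_def split_eqs
    using d avoids_parts order_parts avoids321_map_strict_mono[OF mono] by simp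
qed

lemma glue_split: "glue b (split_left b w) (split_right b w) = w"
proof -
  have "last (split_left b w) = a" "hd (split_right b w) = c"
    unfolding split_eqs using order_parts by (simp_all add: repl_def)
  then have "glue b (split_left b w) (split_right b w)
      = butlast (map (repl b c) (map (repl c b) (u @ [a]))) @ b # tl (map (repl b a) (map (repl a b) (c # v)))"
    unfolding glue_def split_eqs by simp
  also have "\<dots> = u @ b # v"
    using map_repl_cancel[OF distinct_parts(3)] map_repl_cancel[OF distinct_parts(4)] by simp
  finally show ?thesis using w_eq by simp
qed

end

section \<open>Counting permutations with exactly one 321\<close>

definition once_at :: "nat \<Rightarrow> nat \<Rightarrow> nat list set" where
  "once_at n b = {w \<in> perms n. \<exists>i k. occ321 w = {(i, b - 1, k)}}"

lemma once_at_split: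
  assumes "w \<in> once_at n b" "2 \<le> b"
  shows "split_left b w \<in> left_factors b" "split_right b w \<in> right_factors n b"
    "glue b (split_left b w) (split_right b w) = w"
proof -
  obtain i k where "w \<in> perms n" "occ321 w = {(i, b - 1, k)}" using assms(1) unfolding once_at_def by blast
  then interpret split_data n w i "b - 1" k by unfold_locales
  have "Suc (b - 1) = b" using assms(2) by simp
  then show "split_left b w \<in> left_factors b" "split_right b w \<in> right_factors n b"
    "glue b (split_left b w) (split_right b w) = w"
    using split_left_factor split_right_factor glue_split by simp_all
qed

lemma bij_glue:
  assumes "2 \<le> b" "b < n"
  shows "bij_betw (\<lambda>(L, R). glue b L R) (left_factors b \<times> right_factors n b) (once_at n b)"
proof (rule bij_betw_byWitness[where f' = "\<lambda>w. (split_left b w, split_right b w)"])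
  have gd: "glue_data n b L R" if "(L, R) \<in> left_factors b \<times> right_factors n b" for L R
    using that assms by unfold_locales auto
  show "\<forall>x\<in>left_factors b \<times> right_factors n b.
          (\<lambda>w. (split_left b w, split_right b w)) ((\<lambda>(L, R). glue b L R) x) = x"
    using glue_data.split_glue[OF gd] by auto
  show "(\<lambda>(L, R). glue b L R) ` (left_factors b \<times> right_factors n b) \<subseteq> once_at n b"
    using glue_data.glue_perm[OF gd] glue_data.glue_occ321[OF gd] unfolding once_at_def by auto
  show "\<forall>w\<in>once_at n b. (\<lambda>(L, R). glue b L R) (split_left b w, split_right b w) = w"
    using once_at_split assms by simp
  show "(\<lambda>w. (split_left b w, split_right b w)) ` once_at n b \<subseteq> left_factors b \<times> right_factors n b"
    using once_at_split assms by auto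
qed

lemma card_right_factors:
  assumes "1 \<le> b" "b \<le> n"
  shows "card (right_factors n b) = card {R \<in> perms (n - b + 1). avoids321 R \<and> hd R \<noteq> 1}"
proof -
  let ?d = "b - 1"
  have "{b..n} = {?d + 1..?d + (n - b + 1)}" using assms by simp
  then have "card (right_factors n b)
      = card {R \<in> perms (n - b + 1). avoids321 (map (\<lambda>x. x + ?d) R) \<and> hd (map (\<lambda>x. x + ?d) R) \<noteq> b}"
    unfolding right_factors_def using card_shifted_perms[of ?d "n - b + 1"] by simp
  also have "\<dots> = card {R \<in> perms (n - b + 1). avoids321 R \<and> hd R \<noteq> 1}"
  proof (intro arg_cong[where f = card] Collect_cong conj_cong refl avoids321_shift)
    fix R assume R: "R \<in> perms (n - b + 1)"
    have "R \<noteq> []" using perms_length[OF R] by auto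
    then show "hd (map (\<lambda>x. x + ?d) R) \<noteq> b \<longleftrightarrow> hd R \<noteq> 1" using assms by (auto simp: hd_map)
  qed
  finally show ?thesis .
qed

lemma card_once_at:
  assumes "2 \<le> b" "b < n"
  shows "int (card (once_at n b))
       = (int (catalan b) - int (catalan (b - 1))) * (int (catalan (n - b + 1)) - int (catalan (n - b)))"
proof -
  have "card (once_at n b) = card (left_factors b) * card (right_factors n b)"
    using bij_betw_same_card[OF bij_glue[OF assms]] by (simp add: card_cartesian_product)
  moreover have "int (card (left_factors b)) = int (catalan b) - int (catalan (b - 1))"
    unfolding left_factors_def using card_avoiders_last_not_max assms by simp
  moreover have "int (card (right_factors n b)) = int (catalan (n - b + 1)) - int (catalan (n - b))"
    using card_right_factors card_avoiders_hd_not_one[of "n - b + 1"] assms by simp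
  ultimately show ?thesis by simp
qed

lemma once_partition:
  "{w \<in> perms n. contains321_once w} = (\<Union>b \<in> {2..n-1}. once_at n b)"
proof (rule set_eqI, rule iffI)
  fix w assume w: "w \<in> {w \<in> perms n. contains321_once w}"
  then have "card (occ321 w) = 1" unfolding contains321_once_def by simp
  then obtain t where "occ321 w = {t}" by (rule card_1_singletonE)
  moreover obtain i j k where "t = (i, j, k)" by (cases t)
  ultimately have o: "occ321 w = {(i, j, k)}" by simp
  then have "i < j" "j < k" "k < n" using occ321_singleton[OF o] perms_length w by auto
  then have "Suc j \<in> {2..n-1}" by auto
  moreover have "w \<in> once_at n (Suc j)" using w o unfolding once_at_def by auto
  ultimately show "w \<in> (\<Union>b \<in> {2..n-1}. once_at n b)" by blast
qed (auto simp: once_at_def contains321_once_def)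

lemma once_at_disjoint:
  assumes "2 \<le> b" "2 \<le> b'" "b \<noteq> b'"
  shows "once_at n b \<inter> once_at n b' = {}"
  using assms unfolding once_at_def by auto

text \<open>Third statement of the theorem (it holds for every n).\<close>

lemma card_contains321_once:
  "int (card {w \<in> perms n. contains321_once w})
     = (\<Sum>b = 2..n-1. (int (catalan b) - int (catalan (b - 1)))
                       * (int (catalan (n - b + 1)) - int (catalan (n - b))))"
proof -
  have "finite (once_at n b)" for b
    using finite_perms by (rule finite_subset[rotated]) (auto simp: once_at_def)
  then have "card {w \<in> perms n. contains321_once w} = (\<Sum>b = 2..n-1. card (once_at n b))"
    unfolding once_partition using once_at_disjoint by (intro card_UN_disjoint) auto
  then have "int (card {w \<in> perms n. contains321_once w}) = (\<Sum>b = 2..n-1. int (card (once_at n b)))"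
    by simp
  also have "\<dots> = (\<Sum>b = 2..n-1. (int (catalan b) - int (catalan (b - 1)))
                       * (int (catalan (n - b + 1)) - int (catalan (n - b))))"
  proof (rule sum.cong)
    fix b assume "b \<in> {2..n-1}"
    then show "int (card (once_at n b)) = (int (catalan b) - int (catalan (b - 1)))
                       * (int (catalan (n - b + 1)) - int (catalan (n - b)))"
      by (intro card_once_at) auto
  qed simp
  finally show ?thesis .
qed

theorem mainTheorem3:
  shows "(\<forall>m::nat. m \<ge> 1 \<longrightarrow>
            int (card {w \<in> perms m. avoids321 w \<and> last w \<noteq> m})
              = int (catalan m) - int (catalan (m - 1))
          \<and> int (card {w \<in> perms m. avoids321 w \<and> hd w \<noteq> 1})
              = int (catalan m) - int (catalan (m - 1)))
       \<and> (\<forall>n::nat. n \<ge> 3 \<longrightarrow>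
            int (card {w \<in> perms n. contains321_once w})
              = (\<Sum>b = 2..n-1. (int (catalan b) - int (catalan (b - 1)))
                                * (int (catalan (n - b + 1)) - int (catalan (n - b)))))"
  by (intro conjI allI impI card_avoiders_last_not_max card_avoiders_hd_not_one card_contains321_once)

end
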